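(* Let $\mathbf X=(X_1,\dots,X_d)$ be a random vector whose copula $C$ is in the domain of attraction of a multivariate extreme value distribution $G$, and suppose there is an index $\kappa\in\{1,\dots,d\}$ with $\omega(F_\kappa)=:\omega^*$ such that $\lim_{s\uparrow\omega^*}\frac{1-F_i(s)}{1-F_\kappa(s)}=\gamma_i\in[0,\infty)$ for all $1\le i\le d$. Then there exists a norm $\|\cdot\|_D$ on $\mathbb R^d$ with $\|\mathbf e_i\|_D=1$, $1\le i\le d$, such that for every nonempty index set $K\subset\{1,\dots,d\}$, \[ P(X_k\le s,\ k\in K)=1-(1-F_\kappa(s))\Big\|\sum_{k\in K}\gamma_k\mathbf e_k\Big\|_D+o(1-F_\kappa(s))\qquad\text{as } s\uparrow\omega^*. \]
   Context: $F_i$ denotes the distribution function of $X_i$; the copula $C$ of $\mathbf X$ is a distribution function on $[0,1]^d$ with uniform margins such that $\mathbf X$ has the same distribution as $(F_1^{-1}(U_1),\dots,F_d^{-1}(U_d))$ for $\mathbf U=(U_1,\dots,U_d)\sim C$, where $F^{-1}(q)=\inf\{t\in\mathbb R: F(t)\ge q\}$ is the generalized inverse. The upper endpoint of a distribution function $F$ is $\omega(F)=\sup\{t\in\mathbb R:F(t)<1\}$. "$C$ is in the domain of attraction of $G$" means $C^n\big(1+\tfrac{x_1}{n},\dots,1+\tfrac{x_d}{n}\big)\to G(\mathbf x)$ as $n\to\infty$ for all $\mathbf x=(x_1,\dots,x_d)\le\mathbf 0$. $\mathbf e_i$ is the $i$-th unit vector in $\mathbb R^d$. *)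

theory Defs
  imports "HOL-Probability.Probability" "HOL-Library.Landau_Symbols"
begin

definition marg_cdf :: "'a measure \<Rightarrow> ('a \<Rightarrow> real^'d) \<Rightarrow> 'd \<Rightarrow> real \<Rightarrow> real" where
  "marg_cdf M X i t = measure M {w \<in> space M. X w $ i \<le> t}"

definition geninv :: "(real \<Rightarrow> real) \<Rightarrow> real \<Rightarrow> real" where
  "geninv F q = Inf {t. F t \<ge> q}"

definition upper_endpoint :: "(real \<Rightarrow> real) \<Rightarrow> ereal" where
  "upper_endpoint F = Sup (ereal ` {t. F t < 1})"

definition up_to :: "ereal \<Rightarrow> real filter" where
  "up_to w = (if w = \<infinity> then at_top else at_left (real_of_ereal w))"

definition mdf :: "(real^'d) measure \<Rightarrow> real^'d \<Rightarrow> real" where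
  "mdf Q x = measure Q {y. \<forall>i. y $ i \<le> x $ i}"

definition is_copula_of :: "(real^'d \<Rightarrow> real) \<Rightarrow> 'a measure \<Rightarrow> ('a \<Rightarrow> real^'d) \<Rightarrow> bool" where
  "is_copula_of C M X \<longleftrightarrow>
     (\<exists>Q. prob_space Q \<and> sets Q = sets (borel :: (real^'d) measure) \<and>
          C = mdf Q \<and>
          (\<forall>i. \<forall>t\<in>{0..1}. measure Q {y. y $ i \<le> t} = t) \<and>
          distr Q borel (\<lambda>u. \<chi> i. geninv (marg_cdf M X i) (u $ i)) = distr M borel X)"

definition mevd :: "(real^'d \<Rightarrow> real) \<Rightarrow> bool" where
  "mevd G \<longleftrightarrow>
     (\<exists>Q. prob_space Q \<and> sets Q = sets (borel :: (real^'d) measure) \<and> G = mdf Q \<and>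
          (\<forall>i. \<not> (\<exists>c. measure Q {y. y $ i = c} = 1))) \<and>
     (\<forall>n::nat. n \<ge> 1 \<longrightarrow> (\<exists>a b :: real^'d. (\<forall>i. a $ i > 0) \<and>
          (\<forall>x. G (\<chi> i. a $ i * x $ i + b $ i) ^ n = G x)))"

definition in_doa :: "(real^'d \<Rightarrow> real) \<Rightarrow> (real^'d \<Rightarrow> real) \<Rightarrow> bool" where
  "in_doa C G \<longleftrightarrow> (\<forall>x::real^'d. (\<forall>i. x $ i \<le> 0) \<longrightarrow>
      (\<lambda>n. C (\<chi> i. 1 + x $ i / real n) ^ n) \<longlonglongrightarrow> G x)"

definition is_norm :: "(real^'d \<Rightarrow> real) \<Rightarrow> bool" where
  "is_norm N \<longleftrightarrow> (\<forall>x. N x \<ge> 0) \<and> (\<forall>x. N x = 0 \<longleftrightarrow> x = 0) \<and>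
     (\<forall>c x. N (c *\<^sub>R x) = \<bar>c\<bar> * N x) \<and> (\<forall>x y. N (x + y) \<le> N x + N y)"

end

theory Submission
  imports Defs
begin

text \<open>Write the copula through its stable tail dependence function
  \<open>\<ell>(v) = - ln G(-v) = lim n (1 - C(1 - v/n))\<close>.  By the quantile representation,
  \<open>P(X\<^sub>k \<le> s, k \<in> K) = C(u(s))\<close> with \<open>1 - u\<^sub>k(s) \<sim> \<gamma>\<^sub>k (1 - F\<^sub>\<kappa>(s))\<close>, so
  \<open>1 - C(u(s)) \<sim> (1 - F\<^sub>\<kappa>(s)) \<ell>(\<Sum>\<^bsub>k\<in>K\<^esub> \<gamma>\<^sub>k e\<^sub>k)\<close> as long as \<open>1 - F\<^sub>\<kappa>(s) \<rightarrow> 0\<close>.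
  That \<open>x \<mapsto> \<ell>(\<bar>x\<bar>)\<close> is a norm follows from the limit alone: monotonicity and homogeneity
  are immediate, and subadditivity comes from counting, for \<open>U \<sim> C\<close>, the \<open>n \<le> T\<close> with
  \<open>U \<notin> [0, 1 - v/n]\<close>: these counts are subadditive in \<open>v\<close> up to \<open>1\<close>, while their
  expectations grow like \<open>\<ell>(v) log T\<close>.
  If instead \<open>F\<^sub>\<kappa>\<close> has an atom at a finite upper endpoint \<open>\<omega>\<close>, then \<open>1 - F\<^sub>\<kappa>\<close> does not
  vanish, the error term only has to tend to \<open>0\<close>, and the norm
  \<open>E max\<^sub>k \<bar>x\<^sub>k\<bar> Z\<^sub>k\<close> with \<open>Z\<^sub>k = indicator A\<^sub>k / P(A\<^sub>k)\<close> and \<open>A\<^sub>k = {X\<^sub>k \<ge> \<omega>}\<close>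
  does the job.\<close>

section \<open>Distribution functions with uniform margins\<close>

locale uniform_margins = prob_space Q for Q :: "(real^'d) measure" +
  assumes sets_Q: "sets Q = sets (borel :: (real^'d) measure)"
    and uniform_margin: "\<And>i t. t \<in> {0..1} \<Longrightarrow> measure Q {y. y $ i \<le> t} = t"
begin

lemma space_Q: "space Q = UNIV"
  using sets_eq_imp_space_eq[OF sets_Q] by simp

lemma borel_in_sets_Q: "A \<in> sets borel \<Longrightarrow> A \<in> sets Q"
  using sets_Q by simp

lemma sets_lower_orthant[simp]: "{y. \<forall>i. y $ i \<le> u $ i} \<in> sets Q"
  and sets_component_le[simp]: "{y. y $ i \<le> t} \<in> sets Q"
  and sets_component_gt[simp]: "{y. t < y $ i} \<in> sets Q"
  and sets_component_Ioc[simp]: "{y. a < y $ i \<and> y $ i \<le> b} \<in> sets Q"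
  by (rule borel_in_sets_Q, measurable)+

lemma mdf_mono: "(\<And>i. u $ i \<le> u' $ i) \<Longrightarrow> mdf Q u \<le> mdf Q u'"
  unfolding mdf_def by (rule finite_measure_mono) (auto intro: order_trans)

lemma mdf_le_1: "mdf Q u \<le> 1"
  unfolding mdf_def by simp

lemma mdf_le_component:
  assumes "0 \<le> u $ i" "u $ i \<le> 1"
  shows "mdf Q u \<le> u $ i"
proof -
  have "mdf Q u \<le> measure Q {y. y $ i \<le> u $ i}"
    unfolding mdf_def by (rule finite_measure_mono) auto
  also have "\<dots> = u $ i"
    using assms uniform_margin by auto
  finally show ?thesis .
qed

lemma measure_component_gt:
  assumes "0 \<le> t" "t \<le> 1"
  shows "measure Q {y. t < y $ i} = 1 - t"
proof -
  have "{y. t < y $ i} = space Q - {y. y $ i \<le> t}"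
    by (auto simp: space_Q)
  then show ?thesis
    using prob_compl[of "{y. y $ i \<le> t}"] uniform_margin assms by auto
qed

lemma mdf_ge_Bonferroni:
  assumes "\<And>i. 0 \<le> u $ i \<and> u $ i \<le> 1"
  shows "1 - (\<Sum>i\<in>UNIV. 1 - u $ i) \<le> mdf Q u"
proof -
  have "mdf Q u = 1 - measure Q (\<Union>i. {y. u $ i < y $ i})"
  proof -
    have "{y. \<forall>i. y $ i \<le> u $ i} = space Q - (\<Union>i. {y. u $ i < y $ i})"
      by (auto simp: space_Q not_less) (meson not_le)
    then show ?thesis
      unfolding mdf_def by (simp only:) (rule prob_compl, auto)
  qed
  moreover have "measure Q (\<Union>i. {y. u $ i < y $ i}) \<le> (\<Sum>i\<in>UNIV. measure Q {y. u $ i < y $ i})"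
    by (rule finite_measure_subadditive_finite) auto
  moreover have "(\<Sum>i\<in>UNIV. measure Q {y. u $ i < y $ i}) = (\<Sum>i\<in>UNIV. 1 - u $ i)"
    using measure_component_gt assms by simp
  ultimately show ?thesis by linarith
qed

lemma mdf_diff_le_sum:
  assumes "\<And>i. 0 \<le> u $ i \<and> u $ i \<le> u' $ i \<and> u' $ i \<le> 1"
  shows "mdf Q u' - mdf Q u \<le> (\<Sum>i\<in>UNIV. u' $ i - u $ i)"
proof -
  let ?D = "\<lambda>i. {y. u $ i < y $ i \<and> y $ i \<le> u' $ i}"
  have "mdf Q u' \<le> measure Q ({y. \<forall>i. y $ i \<le> u $ i} \<union> (\<Union>i. ?D i))"
    unfolding mdf_def by (rule finite_measure_mono) (auto simp: not_less intro!: borel_in_sets_Q, measurable)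
  also have "\<dots> \<le> mdf Q u + measure Q (\<Union>i. ?D i)"
    unfolding mdf_def by (rule measure_Un_le) auto
  also have "measure Q (\<Union>i. ?D i) \<le> (\<Sum>i\<in>UNIV. measure Q (?D i))"
    by (rule finite_measure_subadditive_finite) auto
  also have "\<dots> = (\<Sum>i\<in>UNIV. u' $ i - u $ i)"
  proof (rule sum.cong)
    fix i
    have "?D i = {y. y $ i \<le> u' $ i} - {y. y $ i \<le> u $ i}" by auto
    then show "measure Q (?D i) = u' $ i - u $ i"
      using assms[of i] uniform_margin by (simp add: finite_measure_Diff subset_eq)
  qed simp
  finally show ?thesis by simp
qed

lemma mdf_Lipschitz:
  assumes "\<And>i. 0 \<le> u $ i \<and> u $ i \<le> 1" "\<And>i. 0 \<le> u' $ i \<and> u' $ i \<le> 1"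
  shows "\<bar>mdf Q u - mdf Q u'\<bar> \<le> (\<Sum>i\<in>UNIV. \<bar>u $ i - u' $ i\<bar>)"
proof -
  define m where "m = (\<chi> i. min (u $ i) (u' $ i))"
  have "mdf Q u - mdf Q m \<le> (\<Sum>i\<in>UNIV. u $ i - m $ i)"
    by (rule mdf_diff_le_sum) (use assms in \<open>auto simp: m_def\<close>)
  moreover have "mdf Q u' - mdf Q m \<le> (\<Sum>i\<in>UNIV. u' $ i - m $ i)"
    by (rule mdf_diff_le_sum) (use assms in \<open>auto simp: m_def\<close>)
  moreover have "mdf Q m \<le> mdf Q u" "mdf Q m \<le> mdf Q u'"
    by (rule mdf_mono, simp add: m_def)+
  moreover have "(\<Sum>i\<in>UNIV. u $ i - m $ i) \<le> (\<Sum>i\<in>UNIV. \<bar>u $ i - u' $ i\<bar>)"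
       "(\<Sum>i\<in>UNIV. u' $ i - m $ i) \<le> (\<Sum>i\<in>UNIV. \<bar>u $ i - u' $ i\<bar>)"
    by (rule sum_mono, simp add: m_def)+
  ultimately show ?thesis by linarith
qed

lemma mdf_one: "mdf Q (\<chi> i. 1) = 1"
  using mdf_ge_Bonferroni[of "\<chi> i. 1"] mdf_le_1[of "\<chi> i. 1"] by simp

end

section \<open>The stable tail dependence function\<close>

lemma mult_neg_ln_le_one_minus:
  fixes c :: real
  assumes "0 < c"
  shows "c * - ln c \<le> 1 - c"
proof -
  have "ln (1 / c) \<le> 1 / c - 1"
    by (rule ln_le_minus_one) (use assms in simp)
  then show ?thesis
    using assms by (simp add: ln_div field_simps)
qed

lemma power_tendsto_imp_defect_tendsto:
  fixes c :: "nat \<Rightarrow> real"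
  assumes lim: "(\<lambda>n. c n ^ n) \<longlonglongrightarrow> g" and S: "0 \<le> S"
    and lower: "\<And>n. S < real n \<Longrightarrow> 1 - S / real n \<le> c n" and upper: "\<And>n. c n \<le> 1"
  shows "(\<lambda>n. real n * (1 - c n)) \<longlonglongrightarrow> - ln g"
proof -
  have large: "eventually (\<lambda>n. S < real n) sequentially"
    using filterlim_real_sequentially by (simp add: filterlim_at_top_dense)
  have c_pos: "0 < c n" if "S < real n" for n
  proof -
    have "S / real n < 1" using that S by simp
    then show ?thesis using lower[OF that] by linarith
  qed
  have "exp (-S) \<le> g"
  proof (rule tendsto_le[OF _ lim tendsto_exp_limit_sequentially])
    show "\<forall>\<^sub>F n in sequentially. (1 + - S / real n) ^ n \<le> c n ^ n"
      using large
    proof eventually_elim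
      case (elim n)
      then have "0 \<le> 1 - S / real n" using S by (simp add: field_simps)
      then show ?case using lower[OF elim] by (intro power_mono) auto
    qed
  qed simp
  then have g_pos: "0 < g"
    by (meson exp_gt_zero less_le_trans)
  have c_lim: "c \<longlonglongrightarrow> 1"
  proof (rule real_tendsto_sandwich)
    show "\<forall>\<^sub>F n in sequentially. 1 - S / real n \<le> c n"
      using large by eventually_elim (rule lower)
    show "(\<lambda>n. 1 - S / real n) \<longlonglongrightarrow> 1"
      using tendsto_diff[OF tendsto_const tendsto_divide_0[OF tendsto_const
          filterlim_at_top_imp_at_infinity[OF filterlim_real_sequentially]]] by simp
  qed (use upper in auto)
  have ln_lim: "(\<lambda>n. - (real n * ln (c n))) \<longlonglongrightarrow> - ln g"
  proof -
    have "(\<lambda>n. ln (c n ^ n)) \<longlonglongrightarrow> ln g"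
      by (rule tendsto_ln[OF lim]) (use g_pos in simp)
    moreover have "eventually (\<lambda>n. ln (c n ^ n) = real n * ln (c n)) sequentially"
      using large by eventually_elim (use c_pos in \<open>simp add: ln_realpow\<close>)
    ultimately show ?thesis
      by (intro tendsto_minus) (rule Lim_transform_eventually)
  qed
  show ?thesis
  proof (rule real_tendsto_sandwich)
    show "(\<lambda>n. c n * - (real n * ln (c n))) \<longlonglongrightarrow> - ln g"
      using tendsto_mult[OF c_lim ln_lim] by simp
    show "\<forall>\<^sub>F n in sequentially. c n * - (real n * ln (c n)) \<le> real n * (1 - c n)"
      using large
    proof eventually_elim
      case (elim n)
      show ?case
        using mult_left_mono[OF mult_neg_ln_le_one_minus[OF c_pos[OF elim]], of "real n"]
        by (simp add: algebra_simps)
    qed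
    show "\<forall>\<^sub>F n in sequentially. real n * (1 - c n) \<le> - (real n * ln (c n))"
      using large
    proof eventually_elim
      case (elim n)
      show ?case
        using mult_left_mono[OF ln_le_minus_one[OF c_pos[OF elim]], of "real n"]
        by (simp add: algebra_simps)
    qed
  qed (rule ln_lim)
qed

lemma (in uniform_margins) doa_defect_tendsto:
  assumes doa: "in_doa (mdf Q) G" and v: "\<And>i. 0 \<le> v $ i"
  shows "(\<lambda>n. real n * (1 - mdf Q (\<chi> i. 1 - v $ i / real n))) \<longlonglongrightarrow> - ln (G (\<chi> i. - v $ i))"
proof (rule power_tendsto_imp_defect_tendsto)
  show "(\<lambda>n. mdf Q (\<chi> i. 1 - v $ i / real n) ^ n) \<longlonglongrightarrow> G (\<chi> i. - v $ i)"
    using doa v unfolding in_doa_def by (auto elim!: allE[of _ "\<chi> i. - v $ i"])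
  show "0 \<le> (\<Sum>i\<in>UNIV. v $ i)"
    by (simp add: sum_nonneg v)
  show "1 - (\<Sum>i\<in>UNIV. v $ i) / real n \<le> mdf Q (\<chi> i. 1 - v $ i / real n)"
    if n: "(\<Sum>i\<in>UNIV. v $ i) < real n" for n
  proof -
    have less: "v $ i < real n" for i
      using member_le_sum[of i UNIV "\<lambda>i. v $ i"] v n by simp
    have "0 \<le> 1 - v $ i / real n \<and> 1 - v $ i / real n \<le> 1" for i
      using v[of i] less[of i] by (simp add: divide_le_eq_1)
    then show ?thesis
      using mdf_ge_Bonferroni[of "\<chi> i. 1 - v $ i / real n"] by (simp add: sum_divide_distrib)
  qed
qed (rule mdf_le_1)

text \<open>With \<open>n = \<lfloor>1/e\<rfloor>\<close> one has \<open>1/(n+1) < e \<le> 1/n\<close>, so monotonicity traps \<open>f e / e\<close>.\<close>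
lemma mono_quotient_between_samples:
  fixes f :: "real \<Rightarrow> real"
  assumes mono: "\<And>x y. 0 < x \<Longrightarrow> x \<le> y \<Longrightarrow> f x \<le> f y"
    and nonneg: "\<And>x. 0 < x \<Longrightarrow> 0 \<le> f x"
    and e: "0 < e" "e < 1"
  defines "n \<equiv> nat \<lfloor>inverse e\<rfloor>"
  shows "f (1 / real (Suc n)) * real n \<le> f e / e \<and> f e / e \<le> f (1 / real n) * (real n + 1)"
proof -
  have "1 \<le> \<lfloor>inverse e\<rfloor>"
    using one_less_inverse[OF e] by (simp add: le_floor_iff)
  then have n: "real n \<le> inverse e" "inverse e < real n + 1" "1 \<le> n"
    unfolding n_def by linarith+
  then have e_le: "e \<le> 1 / real n" and e_gt: "1 / real (Suc n) < e"
    using e by (simp_all add: field_simps)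
  have "f e / e \<le> f (1 / real n) / e"
    using mono[OF e(1) e_le] e by (intro divide_right_mono) simp_all
  also have "\<dots> = f (1 / real n) * inverse e"
    by (simp add: field_simps)
  also have "\<dots> \<le> f (1 / real n) * (real n + 1)"
    using n nonneg[of "1 / real n"] by (intro mult_left_mono) auto
  finally have upper: "f e / e \<le> f (1 / real n) * (real n + 1)" .
  have "f (1 / real (Suc n)) * real n \<le> f (1 / real (Suc n)) * inverse e"
    using n nonneg[of "1 / real (Suc n)"] by (intro mult_left_mono) auto
  also have "\<dots> = f (1 / real (Suc n)) / e"
    by (simp add: field_simps)
  also have "\<dots> \<le> f e / e"
    using mono[of "1 / real (Suc n)" e] e_gt e by (intro divide_right_mono) simp_all
  finally show ?thesis
    using upper by simp
qed

lemma mono_tendsto_at_right_0_of_sequence: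
  fixes f :: "real \<Rightarrow> real"
  assumes mono: "\<And>x y. 0 < x \<Longrightarrow> x \<le> y \<Longrightarrow> f x \<le> f y"
    and nonneg: "\<And>x. 0 < x \<Longrightarrow> 0 \<le> f x"
    and lim: "(\<lambda>n. real n * f (1 / real n)) \<longlonglongrightarrow> L"
  shows "((\<lambda>e. f e / e) \<longlongrightarrow> L) (at_right 0)"
proof -
  define p where "p n = f (1 / real n)" for n
  define N where "N e = nat \<lfloor>inverse e\<rfloor>" for e :: real
  have N_lim: "filterlim N sequentially (at_right 0)"
    unfolding N_def
    by (rule filterlim_compose[OF filterlim_nat_sequentially
          filterlim_compose[OF filterlim_floor_sequentially filterlim_inverse_at_top_right]])
  have upper_lim: "(\<lambda>n. p n * (real n + 1)) \<longlonglongrightarrow> L"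
  proof -
    have "(\<lambda>n. (real n * p n) * (real (Suc n) / real n)) \<longlonglongrightarrow> L * 1"
      by (rule tendsto_mult[OF lim[folded p_def] LIMSEQ_Suc_n_over_n])
    moreover have "eventually (\<lambda>n. (real n * p n) * (real (Suc n) / real n) = p n * (real n + 1)) sequentially"
      using eventually_gt_at_top[of 0] by eventually_elim (simp add: field_simps)
    ultimately show ?thesis by (simp add: Lim_transform_eventually)
  qed
  have lower_lim: "(\<lambda>n. p (Suc n) * real n) \<longlonglongrightarrow> L"
  proof -
    have "(\<lambda>n. (real (Suc n) * p (Suc n)) * (real n / real (Suc n))) \<longlonglongrightarrow> L * 1"
      by (rule tendsto_mult[OF LIMSEQ_Suc[OF lim[folded p_def]] LIMSEQ_n_over_Suc_n])
    then show ?thesis by (simp add: field_simps del: of_nat_Suc)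
  qed
  have "eventually (\<lambda>e. 0 < e \<and> e < (1::real)) (at_right 0)"
    by (rule eventually_at_rightI[of 0 1]) auto
  then have trap: "eventually (\<lambda>e. p (Suc (N e)) * real (N e) \<le> f e / e
      \<and> f e / e \<le> p (N e) * (real (N e) + 1)) (at_right 0)"
    unfolding p_def N_def
    by (rule eventually_mono) (rule mono_quotient_between_samples[where f = f, OF mono nonneg], auto)
  show ?thesis
  proof (rule real_tendsto_sandwich)
    show "((\<lambda>e. p (Suc (N e)) * real (N e)) \<longlongrightarrow> L) (at_right 0)"
      by (rule filterlim_compose[OF lower_lim N_lim])
    show "((\<lambda>e. p (N e) * (real (N e) + 1)) \<longlongrightarrow> L) (at_right 0)"
      by (rule filterlim_compose[OF upper_lim N_lim])
  qed (use trap in \<open>auto elim: eventually_mono\<close>)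
qed

lemma nonpos_if_partial_sums_bounded:
  fixes r :: "nat \<Rightarrow> real"
  assumes lim: "(\<lambda>s. real s * r s) \<longlonglongrightarrow> l" and bounded: "\<And>T. (\<Sum>s=1..T. r s) \<le> B"
  shows "l \<le> 0"
proof (rule ccontr)
  assume "\<not> l \<le> 0"
  define \<delta> where "\<delta> = l / 2"
  have \<delta>: "0 < \<delta>" "\<delta> < l"
    using \<open>\<not> l \<le> 0\<close> by (simp_all add: \<delta>_def)
  obtain s0 where s0: "\<And>s. s0 \<le> s \<Longrightarrow> \<delta> < real s * r s"
    using order_tendstoD(1)[OF lim \<delta>(2)] by (auto simp: eventually_sequentially)
  define C where "C = (\<Sum>s<s0. \<bar>r s - \<delta> / real s\<bar>)"
  text \<open>Beyond \<open>s0\<close> the terms dominate the harmonic series \<open>\<delta> / s\<close>.\<close>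
  have harm_bounded: "\<delta> * harm T \<le> B + C" for T
  proof -
    let ?d = "\<lambda>s. r s - \<delta> / real s"
    have "- C \<le> - (\<Sum>s\<in>{1..T} \<inter> {..<s0}. \<bar>?d s\<bar>)"
      unfolding C_def by (intro le_imp_neg_le sum_mono2) auto
    also have "\<dots> \<le> (\<Sum>s\<in>{1..T} \<inter> {..<s0}. ?d s)"
      using sum_abs[of ?d] by (simp add: sum_negf[symmetric] abs_le_iff sum_mono)
    also have "\<dots> \<le> (\<Sum>s=1..T. ?d s)"
    proof (rule sum_mono2)
      show "0 \<le> ?d s" if "s \<in> {1..T} - {1..T} \<inter> {..<s0}" for s
        using s0[of s] that by (auto simp: field_simps)
    qed auto
    also have "\<dots> = (\<Sum>s=1..T. r s) - \<delta> * harm T"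
      by (simp add: harm_def sum_subtractf sum_distrib_left divide_inverse)
    finally show ?thesis using bounded[of T] by simp
  qed
  obtain T where "(B + C) / \<delta> < harm T"
    using filterlim_at_top_dense[THEN iffD1, OF harm_at_top]
    by (auto simp: eventually_sequentially)
  then have "B + C < \<delta> * harm T"
    using \<delta>(1) by (simp add: divide_less_eq mult.commute)
  with harm_bounded[of T] show False by linarith
qed

lemma Suc_card_not_downward_closed:
  assumes down: "\<And>s s'. 1 \<le> s' \<Longrightarrow> s' \<le> s \<Longrightarrow> P s \<Longrightarrow> P s'"
    and less: "card {s\<in>{1..T::nat}. P s} < T"
  shows "\<not> P (Suc (card {s\<in>{1..T}. P s}))"
proof
  define m where "m = card {s\<in>{1..T}. P s}"
  assume "P (Suc (card {s\<in>{1..T}. P s}))"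
  then have "{1..Suc m} \<subseteq> {s\<in>{1..T}. P s}"
    using down less by (auto simp: m_def)
  then have "card {1..Suc m} \<le> m"
    unfolding m_def by (intro card_mono) auto
  then show False by simp
qed

lemma exceedance_downward_closed:
  fixes w u :: "real^'d"
  assumes u: "\<And>i. 0 \<le> u $ i" and s': "1 \<le> s'" "s' \<le> s"
    and exceeds: "\<exists>i. real s * w $ i < u $ i"
  shows "\<exists>i. real s' * w $ i < u $ i"
proof -
  from exceeds obtain i where i: "real s * w $ i < u $ i" by blast
  show ?thesis
  proof (cases "0 \<le> w $ i")
    case True
    then have "real s' * w $ i \<le> real s * w $ i"
      using s' by (intro mult_right_mono) auto
    then show ?thesis using i by (intro exI[of _ i]) linarith
  next
    case False
    then have "real s' * w $ i < 0"
      using s' by (simp add: mult_pos_neg)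
    then show ?thesis using u[of i] by (intro exI[of _ i]) linarith
  qed
qed

text \<open>The \<open>s\<close> counted on each side form initial segments \<open>{1..m}\<close> of \<open>{1..T}\<close>; if
  \<open>s = m\<^sub>1 + 1\<close> fails for \<open>v\<close> and \<open>s = m\<^sub>2 + 1\<close> fails for \<open>v'\<close>, then
  \<open>s = m\<^sub>1 + m\<^sub>2 + 2\<close> fails for \<open>v + v'\<close>.\<close>
lemma card_exceedances_add_le:
  fixes w v v' :: "real^'d"
  assumes v: "\<And>i. 0 \<le> v $ i" and v': "\<And>i. 0 \<le> v' $ i"
  shows "card {s\<in>{1..T}. \<exists>i. real s * w $ i < v $ i + v' $ i}
    \<le> card {s\<in>{1..T}. \<exists>i. real s * w $ i < v $ i} + card {s\<in>{1..T}. \<exists>i. real s * w $ i < v' $ i} + 1"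
proof -
  define m1 where "m1 = card {s\<in>{1..T}. \<exists>i. real s * w $ i < v $ i}"
  define m2 where "m2 = card {s\<in>{1..T}. \<exists>i. real s * w $ i < v' $ i}"
  note down = exceedance_downward_closed[where w = w]
  show ?thesis
  proof (cases "m1 < T \<and> m2 < T")
    case False
    have "card {s\<in>{1..T}. \<exists>i. real s * w $ i < v $ i + v' $ i} \<le> card {1..T}"
      by (rule card_mono) auto
    then show ?thesis
      using False unfolding m1_def[symmetric] m2_def[symmetric] by auto
  next
    case True
    have not1: "\<not> (\<exists>i. real (Suc m1) * w $ i < v $ i)"
      unfolding m1_def by (rule Suc_card_not_downward_closed) (use True down[of v] v in \<open>auto simp: m1_def\<close>)
    have not2: "\<not> (\<exists>i. real (Suc m2) * w $ i < v' $ i)"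
      unfolding m2_def by (rule Suc_card_not_downward_closed) (use True down[of v'] v' in \<open>auto simp: m2_def\<close>)
    have "{s\<in>{1..T}. \<exists>i. real s * w $ i < v $ i + v' $ i} \<subseteq> {1..m1 + m2 + 1}"
    proof clarify
      fix s i
      assume s: "s \<in> {1..T}" "real s * w $ i < v $ i + v' $ i"
      have le1: "v $ i \<le> real (Suc m1) * w $ i" and le2: "v' $ i \<le> real (Suc m2) * w $ i"
        using not1 not2 by (simp_all add: not_less)
      have "0 \<le> w $ i"
      proof (rule ccontr)
        assume "\<not> 0 \<le> w $ i"
        then have "real (Suc m1) * w $ i < 0" by (simp add: mult_pos_neg)
        then show False using le1 v[of i] by linarith
      qed
      show "s \<in> {1..m1 + m2 + 1}"
      proof (rule ccontr)
        assume "s \<notin> {1..m1 + m2 + 1}"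
        then have "(real (Suc m1) + real (Suc m2)) * w $ i \<le> real s * w $ i"
          using s \<open>0 \<le> w $ i\<close> by (intro mult_right_mono) auto
        then show False
          using le1 le2 s(2) by (simp add: algebra_simps)
      qed
    qed
    then have "card {s\<in>{1..T}. \<exists>i. real s * w $ i < v $ i + v' $ i} \<le> card {1..m1 + m2 + 1}"
      by (rule card_mono[rotated]) auto
    then show ?thesis by (simp add: m1_def m2_def)
  qed
qed

context uniform_margins
begin

definition outside_orthant :: "real^'d \<Rightarrow> nat \<Rightarrow> (real^'d) set" where
  "outside_orthant u s = {y. \<exists>i. real s * (1 - y $ i) < u $ i}"

lemma sets_outside_orthant[simp]: "outside_orthant u s \<in> sets Q"
  unfolding outside_orthant_def by (rule borel_in_sets_Q) measurable

lemma prob_outside_orthant: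
  assumes "0 < s"
  shows "prob (outside_orthant u s) = 1 - mdf Q (\<chi> i. 1 - u $ i / real s)"
proof -
  have "outside_orthant u s = space Q - {y. \<forall>i. y $ i \<le> (\<chi> i. 1 - u $ i / real s) $ i}"
    using assms by (auto simp: outside_orthant_def space_Q not_le field_simps) (metis leD)
  then show ?thesis
    unfolding mdf_def by (simp only:) (rule prob_compl, rule sets_lower_orthant)
qed

text \<open>Both sides are expectations of counting variables; \<open>card_exceedances_add_le\<close>
  compares the counts pointwise.\<close>
lemma sum_prob_outside_orthant_add_le:
  assumes v: "\<And>i. 0 \<le> v $ i" and v': "\<And>i. 0 \<le> v' $ i"
  shows "(\<Sum>s=1..T. prob (outside_orthant (v + v') s))
    \<le> (\<Sum>s=1..T. prob (outside_orthant v s)) + (\<Sum>s=1..T. prob (outside_orthant v' s)) + 1"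
proof -
  define count :: "real^'d \<Rightarrow> real^'d \<Rightarrow> real" where
    "count u y = (\<Sum>s=1..T. indicator (outside_orthant u s) y)" for u y
  have integrable: "integrable Q (count u)" for u
    unfolding count_def[abs_def]
    by (intro Bochner_Integration.integrable_sum integrable_real_indicator)
      (auto simp: less_top[symmetric])
  have expectation: "expectation (count u) = (\<Sum>s=1..T. prob (outside_orthant u s))" for u
    unfolding count_def[abs_def]
    by (subst Bochner_Integration.integral_sum)
      (auto intro: integrable_real_indicator simp: less_top[symmetric])
  have card: "count u y = real (card {s\<in>{1..T}. \<exists>i. real s * (1 - y $ i) < u $ i})" for u y
  proof -
    have "count u y = (\<Sum>s=1..T. of_bool (\<exists>i. real s * (1 - y $ i) < u $ i))"
      unfolding count_def by (rule sum.cong) (auto simp: outside_orthant_def indicator_def)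
    also have "\<dots> = real (card ({1..T} \<inter> {s. \<exists>i. real s * (1 - y $ i) < u $ i}))"
      by simp
    finally show ?thesis by (simp add: Int_def)
  qed
  have "expectation (count (v + v')) \<le> expectation (\<lambda>y. count v y + count v' y + 1)"
  proof (rule integral_mono)
    show "count (v + v') y \<le> count v y + count v' y + 1" for y
      using card_exceedances_add_le[OF v v', of T "\<chi> i. 1 - y $ i"] by (simp add: card)
  qed (use integrable in auto)
  also have "\<dots> = expectation (count v) + expectation (count v') + 1"
    using integrable by (simp add: prob_space)
  finally show ?thesis by (simp add: expectation)
qed

lemma defect_limit_add_le:
  assumes v: "\<And>i. 0 \<le> v $ i" and v': "\<And>i. 0 \<le> v' $ i"
    and lim1: "(\<lambda>n. real n * (1 - mdf Q (\<chi> i. 1 - v $ i / real n))) \<longlonglongrightarrow> L1"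
    and lim2: "(\<lambda>n. real n * (1 - mdf Q (\<chi> i. 1 - v' $ i / real n))) \<longlonglongrightarrow> L2"
    and lim3: "(\<lambda>n. real n * (1 - mdf Q (\<chi> i. 1 - (v + v') $ i / real n))) \<longlonglongrightarrow> L3"
  shows "L3 \<le> L1 + L2"
proof -
  define r where "r s = prob (outside_orthant (v + v') s) - prob (outside_orthant v s)
    - prob (outside_orthant v' s)" for s
  have "L3 - L1 - L2 \<le> 0"
  proof (rule nonpos_if_partial_sums_bounded)
    have "(\<lambda>s. real s * (1 - mdf Q (\<chi> i. 1 - (v + v') $ i / real s))
        - real s * (1 - mdf Q (\<chi> i. 1 - v $ i / real s))
        - real s * (1 - mdf Q (\<chi> i. 1 - v' $ i / real s))) \<longlonglongrightarrow> L3 - L1 - L2"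
      by (intro tendsto_diff lim1 lim2 lim3)
    then show "(\<lambda>s. real s * r s) \<longlonglongrightarrow> L3 - L1 - L2"
      by (rule Lim_transform_eventually)
        (use eventually_gt_at_top[of 0] in \<open>eventually_elim, simp add: r_def prob_outside_orthant algebra_simps\<close>)
    show "(\<Sum>s=1..T. r s) \<le> 1" for T
      using sum_prob_outside_orthant_add_le[OF v v', of T] by (simp add: r_def sum_subtractf)
  qed
  then show ?thesis by simp
qed

end

locale copula_doa = uniform_margins Q for Q :: "(real^'d) measure" +
  fixes G :: "real^'d \<Rightarrow> real"
  assumes doa: "in_doa (mdf Q) G"
begin

definition stdf :: "real^'d \<Rightarrow> real" where
  "stdf v = - ln (G (\<chi> i. - v $ i))"

definition D_norm :: "real^'d \<Rightarrow> real" where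
  "D_norm x = stdf (\<chi> i. \<bar>x $ i\<bar>)"

lemma stdf_sequentially:
  "(\<And>i. 0 \<le> v $ i) \<Longrightarrow> (\<lambda>n. real n * (1 - mdf Q (\<chi> i. 1 - v $ i / real n))) \<longlonglongrightarrow> stdf v"
  unfolding stdf_def by (rule doa_defect_tendsto[OF doa])

lemma stdf_at_right_0:
  assumes v: "\<And>i. 0 \<le> v $ i"
  shows "((\<lambda>e. (1 - mdf Q (\<chi> i. 1 - e * v $ i)) / e) \<longlongrightarrow> stdf v) (at_right 0)"
proof (rule mono_tendsto_at_right_0_of_sequence)
  show "1 - mdf Q (\<chi> i. 1 - x * v $ i) \<le> 1 - mdf Q (\<chi> i. 1 - y * v $ i)" if "x \<le> y" for x y
    using that v by (simp add: mdf_mono mult_right_mono)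
  show "0 \<le> 1 - mdf Q (\<chi> i. 1 - x * v $ i)" for x
    by (simp add: mdf_le_1)
  show "(\<lambda>n. real n * (1 - mdf Q (\<chi> i. 1 - 1 / real n * v $ i))) \<longlonglongrightarrow> stdf v"
    using stdf_sequentially[OF v] by simp
qed

lemma stdf_limit_unique:
  "(\<And>i. 0 \<le> v $ i) \<Longrightarrow> (\<lambda>n. real n * (1 - mdf Q (\<chi> i. 1 - v $ i / real n))) \<longlonglongrightarrow> L \<Longrightarrow> stdf v = L"
  using LIMSEQ_unique stdf_sequentially by blast

lemma component_le_stdf:
  assumes v: "\<And>i. 0 \<le> v $ i"
  shows "v $ j \<le> stdf v"
proof (rule LIMSEQ_le_const[OF stdf_sequentially[OF v]])
  obtain N :: nat where N: "v $ j < real N"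
    using reals_Archimedean2 by blast
  show "\<exists>N. \<forall>n\<ge>N. v $ j \<le> real n * (1 - mdf Q (\<chi> i. 1 - v $ i / real n))"
  proof (intro exI allI impI)
    fix n assume "N \<le> n"
    then have n: "v $ j < real n" using N by linarith
    have "mdf Q (\<chi> i. 1 - v $ i / real n) \<le> 1 - v $ j / real n"
      using mdf_le_component[of "\<chi> i. 1 - v $ i / real n" j] v[of j] n by (simp add: field_simps)
    then have "real n * (v $ j / real n) \<le> real n * (1 - mdf Q (\<chi> i. 1 - v $ i / real n))"
      by (intro mult_left_mono) simp_all
    then show "v $ j \<le> real n * (1 - mdf Q (\<chi> i. 1 - v $ i / real n))"
      using n v[of j] by simp
  qed
qed

lemma stdf_nonneg: "(\<And>i. 0 \<le> v $ i) \<Longrightarrow> 0 \<le> stdf v"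
  using component_le_stdf order_trans by blast

lemma stdf_zero: "stdf 0 = 0"
  by (rule stdf_limit_unique) (simp_all add: mdf_one)

lemma stdf_mono:
  assumes v: "\<And>i. 0 \<le> v $ i" and le: "\<And>i. v $ i \<le> w $ i"
  shows "stdf v \<le> stdf w"
proof (rule LIMSEQ_le[OF stdf_sequentially[OF v] stdf_sequentially])
  show "0 \<le> w $ i" for i
    using v[of i] le[of i] by linarith
  have mdf_le: "mdf Q (\<chi> i. 1 - w $ i / real n) \<le> mdf Q (\<chi> i. 1 - v $ i / real n)" for n
    by (rule mdf_mono) (simp add: divide_right_mono le)
  show "\<exists>N. \<forall>n\<ge>N. real n * (1 - mdf Q (\<chi> i. 1 - v $ i / real n))
      \<le> real n * (1 - mdf Q (\<chi> i. 1 - w $ i / real n))"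
    by (intro exI[of _ 0] allI impI mult_left_mono) (simp_all add: mdf_le)
qed

lemma stdf_scaleR:
  assumes v: "\<And>i. 0 \<le> v $ i" and c: "0 \<le> c"
  shows "stdf (c *\<^sub>R v) = c * stdf v"
proof (cases "c = 0")
  case True
  then show ?thesis by (simp add: stdf_zero)
next
  case False
  with c have c: "0 < c" by simp
  have scale: "filterlim (\<lambda>e. c * e) (at_right 0) (at_right (0::real))"
  proof (rule filterlim_at_withinI)
    show "((\<lambda>e. c * e) \<longlongrightarrow> 0) (at_right 0)"
      using tendsto_mult[OF tendsto_const[of c] tendsto_ident_at[of 0 "{0<..}"]] by simp
    show "\<forall>\<^sub>F e in at_right 0. c * e \<in> {0<..} - {0}"
      using eventually_at_right_less[of 0] by eventually_elim (use c in simp)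
  qed
  have "((\<lambda>e. c * ((1 - mdf Q (\<chi> i. 1 - (c * e) * v $ i)) / (c * e))) \<longlongrightarrow> c * stdf v) (at_right 0)"
    by (rule tendsto_mult[OF tendsto_const filterlim_compose[OF stdf_at_right_0[OF v] scale]])
  moreover have "c * ((1 - mdf Q (\<chi> i. 1 - (c * e) * v $ i)) / (c * e))
      = (1 - mdf Q (\<chi> i. 1 - e * (c *\<^sub>R v) $ i)) / e" for e
    using c by (simp add: mult_ac)
  ultimately have "((\<lambda>e. (1 - mdf Q (\<chi> i. 1 - e * (c *\<^sub>R v) $ i)) / e) \<longlongrightarrow> c * stdf v) (at_right 0)"
    by simp
  moreover have "((\<lambda>e. (1 - mdf Q (\<chi> i. 1 - e * (c *\<^sub>R v) $ i)) / e) \<longlongrightarrow> stdf (c *\<^sub>R v)) (at_right 0)"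
    by (rule stdf_at_right_0) (simp add: v c less_imp_le)
  ultimately show ?thesis
    using tendsto_unique[of "at_right (0::real)"] by fastforce
qed

lemma stdf_add_le:
  assumes v: "\<And>i. 0 \<le> v $ i" and w: "\<And>i. 0 \<le> w $ i"
  shows "stdf (v + w) \<le> stdf v + stdf w"
  by (rule defect_limit_add_le[OF v w stdf_sequentially[OF v] stdf_sequentially[OF w]
        stdf_sequentially]) (simp add: v w)

lemma stdf_axis: "stdf (axis j 1) = 1"
proof (rule stdf_limit_unique)
  show "0 \<le> (axis j 1 :: real^'d) $ i" for i
    by (simp add: axis_def)
  have "mdf Q (\<chi> i. 1 - axis j 1 $ i / real n) = 1 - 1 / real n" if "0 < n" for n
  proof -
    define u :: "real^'d" where "u = (\<chi> i. 1 - axis j 1 $ i / real n)"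
    have u: "0 \<le> u $ i \<and> u $ i \<le> 1" for i
      using that by (auto simp: u_def axis_def)
    have "(\<Sum>i\<in>UNIV. 1 - u $ i) = (\<Sum>i\<in>UNIV. if i = j then 1 / real n else 0)"
      by (rule sum.cong) (auto simp: u_def axis_def)
    moreover have "1 / real n \<le> 1"
      using that by simp
    ultimately show ?thesis
      using mdf_le_component[of u j] mdf_ge_Bonferroni[of u] u unfolding u_def
      by (simp add: axis_def)
  qed
  then have "\<forall>\<^sub>F n in sequentially. real n * (1 - mdf Q (\<chi> i. 1 - axis j 1 $ i / real n)) = 1"
    by (intro eventually_mono[OF eventually_gt_at_top[of 0]]) simp
  then show "(\<lambda>n. real n * (1 - mdf Q (\<chi> i. 1 - axis j 1 $ i / real n))) \<longlonglongrightarrow> 1"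
    by (rule tendsto_eventually)
qed

lemma D_norm_is_norm: "is_norm D_norm"
  unfolding is_norm_def
proof (intro conjI allI)
  fix x :: "real^'d"
  show "0 \<le> D_norm x"
    unfolding D_norm_def by (rule stdf_nonneg) simp
  show "D_norm x = 0 \<longleftrightarrow> x = 0"
  proof
    assume "D_norm x = 0"
    then have "\<bar>x $ i\<bar> \<le> 0" for i
      using component_le_stdf[of "\<chi> i. \<bar>x $ i\<bar>" i] by (simp add: D_norm_def)
    then show "x = 0" by (simp add: vec_eq_iff)
  qed (simp add: D_norm_def stdf_zero[unfolded zero_vec_def])
  fix c :: real
  have "(\<chi> i. \<bar>(c *\<^sub>R x) $ i\<bar>) = \<bar>c\<bar> *\<^sub>R (\<chi> i. \<bar>x $ i\<bar>)"
    by (simp add: vec_eq_iff abs_mult)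
  then show "D_norm (c *\<^sub>R x) = \<bar>c\<bar> * D_norm x"
    unfolding D_norm_def by (simp add: stdf_scaleR)
next
  fix x y :: "real^'d"
  have "D_norm (x + y) \<le> stdf ((\<chi> i. \<bar>x $ i\<bar>) + (\<chi> i. \<bar>y $ i\<bar>))"
    unfolding D_norm_def by (rule stdf_mono) (auto simp: abs_triangle_ineq)
  also have "\<dots> \<le> D_norm x + D_norm y"
    unfolding D_norm_def by (rule stdf_add_le) auto
  finally show "D_norm (x + y) \<le> D_norm x + D_norm y" .
qed

lemma D_norm_axis: "D_norm (axis j 1) = 1"
proof -
  have "(\<chi> i. \<bar>axis j 1 $ i\<bar>) = (axis j 1 :: real^'d)"
    by (simp add: vec_eq_iff axis_def)
  then show ?thesis
    by (simp add: D_norm_def stdf_axis)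
qed

end

section \<open>The quantile representation\<close>

lemma (in prob_space) prob_le_eq_cdf_distr:
  assumes "Y \<in> borel_measurable M"
  shows "prob {w \<in> space M. Y w \<le> t} = cdf (distr M borel Y) t"
proof -
  have "cdf (distr M borel Y) t = prob (Y -` {..t} \<inter> space M)"
    unfolding cdf_def by (rule measure_distr) (use assms in auto)
  also have "Y -` {..t} \<inter> space M = {w \<in> space M. Y w \<le> t}" by auto
  finally show ?thesis ..
qed

lemma borel_measurable_vec_nth:
  fixes X :: "'a \<Rightarrow> real^'d"
  assumes "X \<in> borel_measurable M"
  shows "(\<lambda>w. X w $ i) \<in> borel_measurable M"
  by (rule measurable_compose[OF assms borel_measurable_nth])

lemma marg_cdf_eq_cdf_distr:
  assumes "prob_space M" "X \<in> borel_measurable M"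
  shows "marg_cdf M X i = cdf (distr M borel (\<lambda>w. X w $ i))"
  using prob_space.prob_le_eq_cdf_distr[OF assms(1) borel_measurable_vec_nth[OF assms(2)]]
  by (auto simp: marg_cdf_def)

context real_distribution
begin

lemma geninv_cdf_le_iff:
  assumes q: "0 < q" "q < 1"
  shows "geninv (cdf M) q \<le> s \<longleftrightarrow> q \<le> cdf M s"
proof -
  define S where "S = {t. q \<le> cdf M t}"
  obtain t0 where "q < cdf M t0"
    using order_tendstoD(1)[OF cdf_lim_at_top_prob q(2)] by (auto simp: eventually_at_top_linorder)
  then have nonempty: "S \<noteq> {}"
    unfolding S_def by (blast intro: less_imp_le)
  obtain b where b: "\<And>t. t \<le> b \<Longrightarrow> cdf M t < q"
    using order_tendstoD(2)[OF cdf_lim_at_bot q(1)] by (auto simp: eventually_at_bot_linorder)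
  then have bdd: "bdd_below S"
    unfolding bdd_below_def S_def by (metis mem_Collect_eq not_le less_imp_le)
  text \<open>Right-continuity puts the infimum itself into \<open>S\<close>.\<close>
  have "q \<le> cdf M (Inf S)"
  proof (rule tendsto_lowerbound[OF cdf_is_right_cont[unfolded continuous_within]])
    show "eventually (\<lambda>t. q \<le> cdf M t) (at_right (Inf S))"
    proof (rule eventually_at_rightI[of "Inf S" "Inf S + 1"])
      fix t assume "t \<in> {Inf S<..<Inf S + 1}"
      then obtain t' where "t' \<in> S" "t' < t"
        using cInf_less_iff[OF nonempty bdd] by auto
      then show "q \<le> cdf M t"
        using cdf_nondecreasing[of t' t] by (auto simp: S_def)
    qed simp
  qed simp
  then show ?thesis
    using cdf_nondecreasing cInf_lower[OF _ bdd]
    unfolding geninv_def S_def[symmetric] by (auto simp: S_def intro: order_trans)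
qed

lemma borel_measurable_geninv_cdf: "geninv (cdf M) \<in> borel_measurable borel"
proof (rule borel_measurable_piecewise_mono[of "{{..0}, {0<..<1}, {1}, {1<..}}"])
  show "\<Union> {{..0::real}, {0<..<1}, {1}, {1<..}} = UNIV"
    by (auto simp: not_less)
  have below: "geninv (cdf M) q = geninv (cdf M) 0" if "q \<le> 0" for q
  proof -
    have "{t. q \<le> cdf M t} = UNIV" "{t. 0 \<le> cdf M t} = UNIV"
      using that order_trans[OF _ cdf_nonneg] by auto
    then show ?thesis by (simp add: geninv_def)
  qed
  have above: "geninv (cdf M) q = geninv (cdf M) 2" if "1 < q" for q
  proof -
    have "{t. q \<le> cdf M t} = {}" "{t. 2 \<le> cdf M t} = {}"
      using that cdf_bounded_prob by (auto simp: not_le intro: le_less_trans[OF cdf_bounded_prob])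
    then show ?thesis by (simp add: geninv_def)
  qed
  have inside: "geninv (cdf M) q \<le> geninv (cdf M) q'" if "0 < q" "q \<le> q'" "q' < 1" for q q'
    using geninv_cdf_le_iff[of q] geninv_cdf_le_iff[of q' "geninv (cdf M) q'"] that by simp
  show "mono_on c (geninv (cdf M))" if "c \<in> {{..0::real}, {0<..<1}, {1}, {1<..}}" for c
  proof (rule mono_onI)
    fix q q' assume "q \<in> c" "q' \<in> c" "q \<le> q'"
    with that show "geninv (cdf M) q \<le> geninv (cdf M) q'"
      using below[of q] below[of q'] above[of q] above[of q'] inside[of q q'] by auto
  qed
qed auto

end

lemma borel_measurable_vec_componentwise:
  fixes f :: "'d::finite \<Rightarrow> real \<Rightarrow> real"
  assumes "\<And>i. f i \<in> borel_measurable borel"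
  shows "(\<lambda>u::real^'d. \<chi> i. f i (u $ i)) \<in> borel_measurable borel"
proof (rule borel_measurable_euclidean_space[THEN iffD2], intro ballI)
  fix b :: "real^'d"
  assume "b \<in> Basis"
  then obtain i where "b = axis i 1"
    by (auto simp: Basis_vec_def)
  then have "(\<lambda>u. (\<chi> i. f i (u $ i)) \<bullet> b) = (\<lambda>u. f i (u $ i))"
    by (simp add: inner_axis)
  then show "(\<lambda>u. (\<chi> i. f i (u $ i)) \<bullet> b) \<in> borel_measurable borel"
    using measurable_compose[OF _ assms[of i], of "\<lambda>u. u $ i"] by simp
qed

context uniform_margins
begin

lemma AE_in_open_unit_cube: "AE u in Q. \<forall>i. 0 < u $ i \<and> u $ i < 1"
proof -
  have "AE u in Q. \<forall>i\<in>UNIV. 0 < u $ i \<and> u $ i < 1"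
  proof (rule AE_finite_allI)
    fix i :: 'd
    have below_1: "{u. u $ i < (1::real)} \<in> sets Q"
      by (rule borel_in_sets_Q) measurable
    have "1 \<le> prob {u. u $ i < 1}"
    proof (rule field_le_epsilon)
      fix \<epsilon> :: real assume "0 < \<epsilon>"
      have "1 - min \<epsilon> 1 = prob {u. u $ i \<le> 1 - min \<epsilon> 1}"
        using \<open>0 < \<epsilon>\<close> by (intro uniform_margin[symmetric]) auto
      also have "\<dots> \<le> prob {u. u $ i < 1}"
        using \<open>0 < \<epsilon>\<close> below_1 by (intro finite_measure_mono) auto
      finally show "1 \<le> prob {u. u $ i < 1} + \<epsilon>" by linarith
    qed
    then have "prob {u. u $ i < 1} = 1"
      using prob_le_1 by (intro antisym) auto
    moreover have "{u::real^'d. 0 < u $ i \<and> u $ i < 1} = {u. u $ i < 1} - {u. u $ i \<le> 0}"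
      by auto
    ultimately have "prob {u. 0 < u $ i \<and> u $ i < 1} = 1"
      using uniform_margin[of 0 i] below_1 by (simp add: finite_measure_Diff subset_eq)
    then show "AE u in Q. 0 < u $ i \<and> u $ i < 1"
      by (rule AE_prob_1[THEN AE_mp]) auto
  qed simp
  then show ?thesis by simp
qed

text \<open>Away from the null set where some \<open>u $ i \<in> {0, 1}\<close>, the quantile transform satisfies
  \<open>geninv F q \<le> s \<longleftrightarrow> q \<le> F s\<close>, so the event \<open>X\<^sub>k \<le> s\<close> becomes \<open>U\<^sub>k \<le> F\<^sub>k s\<close>.\<close>
lemma prob_components_le_eq_mdf:
  assumes M: "prob_space M" and X: "X \<in> borel_measurable M"
    and D: "distr Q borel (\<lambda>u. \<chi> i. geninv (marg_cdf M X i) (u $ i)) = distr M borel X"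
  shows "measure M {w \<in> space M. \<forall>k\<in>K. X w $ k \<le> s}
    = mdf Q (\<chi> i. if i \<in> K then marg_cdf M X i s else 1)"
proof -
  define F where "F i = marg_cdf M X i" for i
  define T where "T u = (\<chi> i. geninv (F i) (u $ i))" for u :: "real^'d"
  define B where "B = {x::real^'d. \<forall>k\<in>K. x $ k \<le> s}"
  have distr_i: "real_distribution (distr M borel (\<lambda>w. X w $ i))" for i
    by (intro prob_space.real_distribution_distr[OF M] borel_measurable_vec_nth[OF X])
  have F_cdf: "F i = cdf (distr M borel (\<lambda>w. X w $ i))" for i
    unfolding F_def by (rule marg_cdf_eq_cdf_distr[OF M X])
  have "T \<in> borel_measurable borel"
    unfolding T_def F_cdf
    by (intro borel_measurable_vec_componentwise real_distribution.borel_measurable_geninv_cdf distr_i)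
  then have T: "T \<in> borel_measurable Q"
    using measurable_cong_sets[OF sets_Q refl] by blast
  have B: "B \<in> sets borel"
    unfolding B_def by measurable
  have "measure M {w \<in> space M. \<forall>k\<in>K. X w $ k \<le> s} = measure (distr M borel X) B"
    by (subst measure_distr[OF X B]) (auto simp: B_def intro!: arg_cong[where f="measure M"])
  also have "\<dots> = measure (distr Q borel T) B"
    using D by (simp add: T_def[abs_def] F_def)
  also have "\<dots> = prob (T -` B \<inter> space Q)"
    by (rule measure_distr[OF T B])
  also have "\<dots> = prob {y. \<forall>i. y $ i \<le> (\<chi> i. if i \<in> K then F i s else 1) $ i}"
  proof (rule measure_eq_AE)
    show "AE y in Q. y \<in> T -` B \<inter> space Q
        \<longleftrightarrow> y \<in> {y. \<forall>i. y $ i \<le> (\<chi> i. if i \<in> K then F i s else 1) $ i}"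
      using AE_in_open_unit_cube
    proof eventually_elim
      case (elim y)
      then have "y \<in> T -` B \<inter> space Q \<longleftrightarrow> (\<forall>k\<in>K. y $ k \<le> F k s)"
        using real_distribution.geninv_cdf_le_iff[OF distr_i] by (auto simp: T_def B_def F_cdf space_Q)
      then show ?case
        using elim by (auto simp: less_imp_le)
    qed
    show "{y. \<forall>i. y $ i \<le> (\<chi> i. if i \<in> K then F i s else 1) $ i} \<in> sets Q"
      by (rule sets_lower_orthant)
  qed (use measurable_sets[OF T B] in auto)
  finally show ?thesis
    unfolding mdf_def F_def .
qed

end

section \<open>Vanishing upper tails\<close>

lemma (in uniform_margins) mdf_difference_negligible:
  fixes a :: "'b \<Rightarrow> real^'d" and v :: "real^'d"
  assumes g: "filterlim g (at_right 0) F"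
    and a: "\<And>i. ((\<lambda>s. (1 - a s $ i) / g s) \<longlongrightarrow> v $ i) F"
    and a_bounds: "\<And>s i. 0 \<le> a s $ i \<and> a s $ i \<le> 1" and v: "\<And>i. 0 \<le> v $ i"
  shows "((\<lambda>s. (mdf Q (\<chi> i. 1 - g s * v $ i) - mdf Q (a s)) / g s) \<longlongrightarrow> 0) F"
proof (rule Lim_null_comparison)
  define R where "R s = (\<Sum>i\<in>UNIV. \<bar>(1 - a s $ i) / g s - v $ i\<bar>)" for s
  show "(R \<longlongrightarrow> 0) F"
    unfolding R_def[abs_def]
    using tendsto_sum[of UNIV "\<lambda>i s. \<bar>(1 - a s $ i) / g s - v $ i\<bar>" "\<lambda>_. 0" F]
      tendsto_rabs_zero[OF LIM_zero[OF a]] by simp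
  have g_pos: "eventually (\<lambda>s. 0 < g s) F"
    using g by (auto simp: filterlim_at elim: eventually_mono)
  have g_small: "eventually (\<lambda>s. \<forall>i. g s * v $ i \<le> 1) F"
  proof (rule eventually_all_finite)
    fix i
    have "((\<lambda>s. g s * v $ i) \<longlongrightarrow> 0 * v $ i) F"
      using g by (intro tendsto_mult tendsto_const) (simp add: filterlim_at)
    then have "eventually (\<lambda>s. g s * v $ i < 1) F"
      by (rule order_tendstoD) simp
    then show "eventually (\<lambda>s. g s * v $ i \<le> 1) F"
      by (rule eventually_mono) simp
  qed
  show "eventually (\<lambda>s. norm ((mdf Q (\<chi> i. 1 - g s * v $ i) - mdf Q (a s)) / g s) \<le> R s) F"
    using g_pos g_small
  proof eventually_elim
    case (elim s)
    have "\<bar>mdf Q (\<chi> i. 1 - g s * v $ i) - mdf Q (a s)\<bar> \<le> (\<Sum>i\<in>UNIV. \<bar>(1 - g s * v $ i) - a s $ i\<bar>)"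
      using mdf_Lipschitz[of "\<chi> i. 1 - g s * v $ i" "a s"] elim v a_bounds
      by (simp add: mult_nonneg_nonneg less_imp_le)
    also have "\<dots> = g s * R s"
      unfolding R_def sum_distrib_left
      using elim(1) by (intro sum.cong refl) (simp add: abs_mult[symmetric] field_simps abs_minus_commute)
    finally show ?case
      using elim(1) by (simp add: abs_divide divide_le_eq mult.commute)
  qed
qed

context copula_doa
begin

lemma mdf_defect_tendsto_stdf:
  fixes a :: "'b \<Rightarrow> real^'d" and v :: "real^'d"
  assumes g: "filterlim g (at_right 0) F"
    and a: "\<And>i. ((\<lambda>s. (1 - a s $ i) / g s) \<longlongrightarrow> v $ i) F"
    and a_bounds: "\<And>s i. 0 \<le> a s $ i \<and> a s $ i \<le> 1" and v: "\<And>i. 0 \<le> v $ i"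
  shows "((\<lambda>s. (1 - mdf Q (a s)) / g s) \<longlongrightarrow> stdf v) F"
proof -
  have "((\<lambda>s. (1 - mdf Q (\<chi> i. 1 - g s * v $ i)) / g s
      + (mdf Q (\<chi> i. 1 - g s * v $ i) - mdf Q (a s)) / g s) \<longlongrightarrow> stdf v + 0) F"
    by (intro tendsto_add filterlim_compose[OF stdf_at_right_0[OF v] g]
        mdf_difference_negligible[OF g a a_bounds v])
  then show ?thesis
    by (simp add: add_divide_distrib[symmetric])
qed

lemma D_norm_tail_expansion:
  assumes M: "prob_space M" and X: "X \<in> borel_measurable M"
    and D: "distr Q borel (\<lambda>u. \<chi> i. geninv (marg_cdf M X i) (u $ i)) = distr M borel X"
    and tail: "filterlim (\<lambda>s. 1 - marg_cdf M X \<kappa> s) (at_right 0) F"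
    and \<gamma>: "\<And>i. 0 \<le> \<gamma> i" "\<And>i. ((\<lambda>s. (1 - marg_cdf M X i s) / (1 - marg_cdf M X \<kappa> s)) \<longlongrightarrow> \<gamma> i) F"
  shows "(\<lambda>s. measure M {w \<in> space M. \<forall>k\<in>K. X w $ k \<le> s}
      - (1 - (1 - marg_cdf M X \<kappa> s) * D_norm (\<Sum>k\<in>K. \<gamma> k *\<^sub>R axis k 1)))
    \<in> o[F](\<lambda>s. 1 - marg_cdf M X \<kappa> s)"
proof -
  define g where "g s = 1 - marg_cdf M X \<kappa> s" for s
  define a where "a s = (\<chi> i. if i \<in> K then marg_cdf M X i s else 1)" for s
  define v :: "real^'d" where "v = (\<Sum>k\<in>K. \<gamma> k *\<^sub>R axis k 1)"
  have v_nth: "v $ i = (if i \<in> K then \<gamma> i else 0)" for i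
    unfolding v_def by (simp add: sum_component axis_def if_distrib cong: if_cong)
  have v: "0 \<le> v $ i" for i
    using \<gamma>(1) by (simp add: v_nth)
  have g_pos: "eventually (\<lambda>s. 0 < g s) F"
    using tail by (auto simp: g_def filterlim_at elim: eventually_mono)
  have "((\<lambda>s. (1 - mdf Q (a s)) / g s) \<longlongrightarrow> stdf v) F"
  proof (rule mdf_defect_tendsto_stdf)
    show "filterlim g (at_right 0) F"
      using tail by (simp add: g_def[abs_def])
    show "((\<lambda>s. (1 - a s $ i) / g s) \<longlongrightarrow> v $ i) F" for i
      using \<gamma>(2)[of i] by (simp add: a_def v_nth g_def)
    show "0 \<le> a s $ i \<and> a s $ i \<le> 1" for s i
      using prob_space.prob_le_1[OF M] by (simp add: a_def marg_cdf_def)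
  qed (rule v)
  moreover have "D_norm v = stdf v"
    using v by (simp add: D_norm_def abs_of_nonneg)
  ultimately have "((\<lambda>s. D_norm v - (1 - mdf Q (a s)) / g s) \<longlongrightarrow> 0) F"
    using tendsto_diff[OF tendsto_const[of "D_norm v"]] by fastforce
  then have "((\<lambda>s. (measure M {w \<in> space M. \<forall>k\<in>K. X w $ k \<le> s} - (1 - g s * D_norm v)) / g s)
      \<longlongrightarrow> 0) F"
    by (rule Lim_transform_eventually) (use g_pos in \<open>eventually_elim,
        simp add: prob_components_le_eq_mdf[OF M X D] a_def field_simps\<close>)
  moreover have "eventually (\<lambda>s. g s \<noteq> 0) F"
    using g_pos by (rule eventually_mono) simp
  ultimately show ?thesis
    unfolding g_def v_def by (rule smalloI_tendsto)
qed

end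

section \<open>Norms generated by random weights\<close>

locale D_norm_generator = prob_space M for M :: "'a measure" +
  fixes Z :: "'d::finite \<Rightarrow> 'a \<Rightarrow> real"
  assumes Z_measurable[measurable]: "\<And>k. Z k \<in> borel_measurable M"
    and Z_nonneg: "\<And>k w. 0 \<le> Z k w"
    and Z_integrable: "\<And>k. integrable M (Z k)"
    and Z_expectation: "\<And>k. expectation (Z k) = 1"
begin

definition weighted_max :: "real^'d \<Rightarrow> 'a \<Rightarrow> real" where
  "weighted_max x w = Max (range (\<lambda>k. \<bar>x $ k\<bar> * Z k w))"

definition generated_norm :: "real^'d \<Rightarrow> real" where
  "generated_norm x = expectation (weighted_max x)"

lemma weighted_max_ge: "\<bar>x $ k\<bar> * Z k w \<le> weighted_max x w"
  unfolding weighted_max_def by (rule Max_ge) auto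

lemma weighted_max_nonneg: "0 \<le> weighted_max x w"
  using weighted_max_ge[of x undefined w] Z_nonneg[of undefined w]
  by (meson mult_nonneg_nonneg abs_ge_zero order_trans)

lemma weighted_max_le_sum: "weighted_max x w \<le> (\<Sum>k\<in>UNIV. \<bar>x $ k\<bar> * Z k w)"
  unfolding weighted_max_def
  by (subst Max_le_iff) (auto intro!: member_le_sum mult_nonneg_nonneg Z_nonneg)

lemma borel_measurable_weighted_max[measurable]: "weighted_max x \<in> borel_measurable M"
  unfolding weighted_max_def[abs_def] by measurable

lemma integrable_weighted_max: "integrable M (weighted_max x)"
proof (rule Bochner_Integration.integrable_bound)
  show "integrable M (\<lambda>w. \<Sum>k\<in>UNIV. \<bar>x $ k\<bar> * Z k w)"
    by (intro Bochner_Integration.integrable_sum integrable_mult_right Z_integrable)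
  show "AE w in M. norm (weighted_max x w) \<le> norm (\<Sum>k\<in>UNIV. \<bar>x $ k\<bar> * Z k w)"
  proof (rule AE_I2)
    fix w
    have "0 \<le> weighted_max x w" "weighted_max x w \<le> (\<Sum>k\<in>UNIV. \<bar>x $ k\<bar> * Z k w)"
      by (rule weighted_max_nonneg, rule weighted_max_le_sum)
    then show "norm (weighted_max x w) \<le> norm (\<Sum>k\<in>UNIV. \<bar>x $ k\<bar> * Z k w)"
      by simp
  qed
qed simp

lemma weighted_max_scaleR: "weighted_max (c *\<^sub>R x) w = \<bar>c\<bar> * weighted_max x w"
proof -
  have "range (\<lambda>k. \<bar>(c *\<^sub>R x) $ k\<bar> * Z k w) = (\<lambda>t. \<bar>c\<bar> * t) ` range (\<lambda>k. \<bar>x $ k\<bar> * Z k w)"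
    by (auto simp: abs_mult mult.assoc image_iff)
  moreover have "\<bar>c\<bar> * Max (range (\<lambda>k. \<bar>x $ k\<bar> * Z k w))
      = Max ((\<lambda>t. \<bar>c\<bar> * t) ` range (\<lambda>k. \<bar>x $ k\<bar> * Z k w))"
    by (rule mono_Max_commute) (auto simp: mono_def mult_left_mono)
  ultimately show ?thesis
    by (simp add: weighted_max_def)
qed

lemma weighted_max_add_le: "weighted_max (x + y) w \<le> weighted_max x w + weighted_max y w"
  unfolding weighted_max_def[of "x + y"]
proof (subst Max_le_iff, simp, simp, intro ballI)
  fix t assume "t \<in> range (\<lambda>k. \<bar>(x + y) $ k\<bar> * Z k w)"
  then obtain k where k: "t = \<bar>(x + y) $ k\<bar> * Z k w" by auto
  have "\<bar>(x + y) $ k\<bar> * Z k w \<le> (\<bar>x $ k\<bar> + \<bar>y $ k\<bar>) * Z k w"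
    by (intro mult_right_mono Z_nonneg) (simp add: abs_triangle_ineq)
  also have "\<dots> = \<bar>x $ k\<bar> * Z k w + \<bar>y $ k\<bar> * Z k w"
    by (simp add: algebra_simps)
  also have "\<dots> \<le> weighted_max x w + weighted_max y w"
    by (intro add_mono weighted_max_ge)
  finally show "t \<le> weighted_max x w + weighted_max y w"
    using k by simp
qed

lemma component_le_generated_norm: "\<bar>x $ k\<bar> \<le> generated_norm x"
proof -
  have "expectation (\<lambda>w. \<bar>x $ k\<bar> * Z k w) \<le> generated_norm x"
    unfolding generated_norm_def
    by (rule integral_mono) (auto intro: integrable_weighted_max Z_integrable weighted_max_ge)
  then show ?thesis
    by (simp add: Z_expectation)
qed

lemma generated_norm_is_norm: "is_norm generated_norm"
  unfolding is_norm_def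
proof (intro conjI allI)
  fix x :: "real^'d"
  show "0 \<le> generated_norm x"
    unfolding generated_norm_def by (rule integral_nonneg_AE) (simp add: weighted_max_nonneg)
  show "generated_norm x = 0 \<longleftrightarrow> x = 0"
  proof
    assume "generated_norm x = 0"
    then show "x = 0"
      using component_le_generated_norm[of x] by (simp add: vec_eq_iff)
  qed (simp add: generated_norm_def weighted_max_def[abs_def])
  show "generated_norm (c *\<^sub>R x) = \<bar>c\<bar> * generated_norm x" for c
  proof -
    have "weighted_max (c *\<^sub>R x) = (\<lambda>w. \<bar>c\<bar> * weighted_max x w)"
      by (intro ext weighted_max_scaleR)
    then show ?thesis
      by (simp add: generated_norm_def)
  qed
next
  fix x y :: "real^'d"
  have "generated_norm (x + y) \<le> expectation (\<lambda>w. weighted_max x w + weighted_max y w)"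
    unfolding generated_norm_def
    by (rule integral_mono) (auto intro: integrable_weighted_max weighted_max_add_le)
  then show "generated_norm (x + y) \<le> generated_norm x + generated_norm y"
    by (simp add: generated_norm_def integrable_weighted_max)
qed

lemma generated_norm_axis: "generated_norm (axis j 1) = 1"
proof -
  have "weighted_max (axis j 1) = Z j"
    unfolding weighted_max_def
  proof (intro ext Max_eqI)
    fix w
    show "Z j w \<in> range (\<lambda>k. \<bar>axis j 1 $ k\<bar> * Z k w)"
      by (auto simp: axis_def image_iff intro!: exI[of _ j])
  qed (auto simp: axis_def Z_nonneg)
  then show ?thesis
    by (simp add: generated_norm_def Z_expectation)
qed

end

lemma (in finite_measure) measure_UN_drop_null:
  assumes "finite K" and "\<And>k. k \<in> K \<Longrightarrow> A k \<in> sets M"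
  shows "measure M (\<Union>k\<in>K. A k) = measure M (\<Union>k\<in>{k\<in>K. measure M (A k) \<noteq> 0}. A k)"
proof (rule antisym)
  let ?N = "\<Union>k\<in>{k\<in>K. measure M (A k) = 0}. A k"
  have "measure M (\<Union>k\<in>K. A k) \<le> measure M ((\<Union>k\<in>{k\<in>K. measure M (A k) \<noteq> 0}. A k) \<union> ?N)"
    by (rule finite_measure_mono) (use assms in \<open>auto intro!: sets.finite_UN\<close>)
  also have "\<dots> \<le> measure M (\<Union>k\<in>{k\<in>K. measure M (A k) \<noteq> 0}. A k) + measure M ?N"
    by (rule measure_Un_le) (use assms in \<open>auto intro!: sets.finite_UN\<close>)
  also have "measure M ?N \<le> (\<Sum>k\<in>{k\<in>K. measure M (A k) = 0}. measure M (A k))"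
    by (rule finite_measure_subadditive_finite) (use assms in \<open>auto intro!: sets.finite_UN\<close>)
  also have "\<dots> = 0"
    by simp
  finally show "measure M (\<Union>k\<in>K. A k) \<le> measure M (\<Union>k\<in>{k\<in>K. measure M (A k) \<noteq> 0}. A k)"
    by simp
  show "measure M (\<Union>k\<in>{k\<in>K. measure M (A k) \<noteq> 0}. A k) \<le> measure M (\<Union>k\<in>K. A k)"
    by (rule finite_measure_mono) (use assms in \<open>auto intro!: sets.finite_UN\<close>)
qed

text \<open>A null event gets the constant generator \<open>1\<close> (the indicator would violate
  \<open>E Z\<^sub>k = 1\<close>); the vectors in \<open>generated_norm_event_probabilities\<close> never see it.\<close>
locale event_generator = prob_space M for M :: "'a measure" +
  fixes A :: "'d::finite \<Rightarrow> 'a set"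
  assumes sets_A: "\<And>k. A k \<in> sets M"
begin

definition Z_event :: "'d \<Rightarrow> 'a \<Rightarrow> real" where
  "Z_event k w = (if prob (A k) = 0 then 1 else indicator (A k) w / prob (A k))"

sublocale D_norm_generator M Z_event
proof
  fix k
  show "Z_event k \<in> borel_measurable M"
    unfolding Z_event_def[abs_def] using sets_A[of k] by measurable
  show "0 \<le> Z_event k w" for w
    by (simp add: Z_event_def)
  show "integrable M (Z_event k)"
    unfolding Z_event_def[abs_def]
    by (cases "prob (A k) = 0") (auto intro!: integrable_real_indicator sets_A simp: less_top[symmetric])
  show "expectation (Z_event k) = 1"
    unfolding Z_event_def[abs_def] using sets_A[of k]
    by (cases "prob (A k) = 0") (simp_all add: prob_space)
qed

lemma generated_norm_event_probabilities:
  assumes c: "0 < c" and x: "\<And>k. x $ k = (if k \<in> K then prob (A k) / c else 0)"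
  shows "generated_norm x = prob (\<Union>k\<in>K. A k) / c"
proof -
  define U where "U = (\<Union>k\<in>{k\<in>K. prob (A k) \<noteq> 0}. A k)"
  have U: "U \<in> sets M"
    unfolding U_def using sets_A by auto
  have max_eq: "weighted_max x w = indicator U w / c" for w
    unfolding weighted_max_def
  proof (rule Max_eqI)
    have entry: "\<bar>x $ k\<bar> * Z_event k w = (if k \<in> K \<and> prob (A k) \<noteq> 0 \<and> w \<in> A k then 1 / c else 0)" for k
      using c by (auto simp: x Z_event_def)
    show "t \<le> indicator U w / c" if "t \<in> range (\<lambda>k. \<bar>x $ k\<bar> * Z_event k w)" for t
      using that c by (auto simp: entry U_def indicator_def)
    show "indicator U w / c \<in> range (\<lambda>k. \<bar>x $ k\<bar> * Z_event k w)"
    proof (cases "w \<in> U")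
      case True
      then obtain k where "k \<in> K" "prob (A k) \<noteq> 0" "w \<in> A k"
        by (auto simp: U_def)
      then show ?thesis
        using True by (auto simp: entry image_iff intro!: exI[of _ k])
    next
      case False
      then show ?thesis
        by (auto simp: entry U_def image_iff)
    qed
  qed simp
  have "prob (\<Union>k\<in>K. A k) = prob U"
    unfolding U_def by (rule measure_UN_drop_null) (simp_all add: sets_A)
  moreover have "weighted_max x = (\<lambda>w. indicator U w / c)"
    by (intro ext max_eq)
  ultimately show ?thesis
    using U by (simp add: generated_norm_def)
qed

end

section \<open>Atoms at the upper endpoint\<close>

lemma prob_all_le_tendsto_at_left:
  fixes X :: "'a \<Rightarrow> real^'d"
  assumes M: "prob_space M" and X: "X \<in> borel_measurable M" and K: "K \<noteq> {}"
  shows "((\<lambda>s. measure M {w \<in> space M. \<forall>k\<in>K. X w $ k \<le> s})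
    \<longlongrightarrow> 1 - measure M (\<Union>k\<in>K. {w \<in> space M. r \<le> X w $ k})) (at_left r)"
proof -
  interpret prob_space M by (rule M)
  define Y where "Y w = Max ((\<lambda>k. X w $ k) ` K)" for w
  have Y: "Y \<in> borel_measurable M"
    unfolding Y_def[abs_def] by (intro borel_measurable_Max borel_measurable_vec_nth[OF X]) simp
  interpret Y: real_distribution "distr M borel Y"
    using Y by simp
  have "{w \<in> space M. Y w \<le> s} = {w \<in> space M. \<forall>k\<in>K. X w $ k \<le> s}" for s
    using K by (auto simp: Y_def)
  moreover have "Y w < r \<longleftrightarrow> (\<forall>k\<in>K. X w $ k < r)" for w
    unfolding Y_def using K by (subst Max_less_iff) auto
  then have "Y -` {..<r} \<inter> space M = space M - (\<Union>k\<in>K. {w \<in> space M. r \<le> X w $ k})"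
    by (auto simp: not_le) (meson leD)
  then have "measure (distr M borel Y) {..<r} = 1 - prob (\<Union>k\<in>K. {w \<in> space M. r \<le> X w $ k})"
    using Y borel_measurable_vec_nth[OF X]
    by (subst measure_distr) (auto intro!: prob_compl)
  ultimately show ?thesis
    using Y.cdf_at_left[of r] prob_le_eq_cdf_distr[OF Y] by simp
qed

lemma le_upper_endpoint: "F t < 1 \<Longrightarrow> ereal t \<le> upper_endpoint F"
  unfolding upper_endpoint_def by (auto intro: Sup_upper)

lemma eventually_less_1_up_to_upper_endpoint:
  fixes F :: "real \<Rightarrow> real"
  assumes mono: "mono F" and finite: "upper_endpoint F \<noteq> -\<infinity>"
  shows "eventually (\<lambda>s. F s < 1) (up_to (upper_endpoint F))"
proof -
  have "eventually (\<lambda>s. ereal s < upper_endpoint F) (up_to (upper_endpoint F))"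
  proof (cases "upper_endpoint F")
    case (real r)
    have "eventually (\<lambda>s. s \<in> {r - 1<..<r}) (at_left r)"
      by (rule eventually_at_left_real) simp
    then show ?thesis
      unfolding real up_to_def by (simp add: eventually_mono)
  next
    case PInf
    then show ?thesis
      by (simp add: up_to_def)
  qed (use finite in simp)
  moreover have "F s < 1" if s: "ereal s < upper_endpoint F" for s
  proof -
    obtain t where "F t < 1" "ereal s < ereal t"
      using s unfolding upper_endpoint_def less_Sup_iff by auto
    then show ?thesis
      using monoD[OF mono, of s t] by simp
  qed
  ultimately show ?thesis
    by (rule eventually_mono)
qed

lemma upper_tail_cases:
  fixes X :: "'a \<Rightarrow> real^'d"
  assumes M: "prob_space M" and X: "X \<in> borel_measurable M"
  obtains (vanishing) "filterlim (\<lambda>s. 1 - marg_cdf M X \<kappa> s) (at_right 0)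
      (up_to (upper_endpoint (marg_cdf M X \<kappa>)))"
    | (atom) r where "upper_endpoint (marg_cdf M X \<kappa>) = ereal r"
      "0 < measure M {w \<in> space M. r \<le> X w $ \<kappa>}"
proof -
  define F where "F = marg_cdf M X \<kappa>"
  interpret real_distribution "distr M borel (\<lambda>w. X w $ \<kappa>)"
    using prob_space.real_distribution_distr[OF M borel_measurable_vec_nth[OF X]] .
  have F: "F = cdf (distr M borel (\<lambda>w. X w $ \<kappa>))"
    unfolding F_def by (rule marg_cdf_eq_cdf_distr[OF M X])
  obtain t where "F t < 1"
    using order_tendstoD(2)[OF cdf_lim_at_bot zero_less_one]
    by (auto simp: F eventually_at_bot_linorder)
  then have finite: "upper_endpoint F \<noteq> -\<infinity>"
    using le_upper_endpoint[of F t] by auto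
  have "eventually (\<lambda>s. F s < 1) (up_to (upper_endpoint F))"
    using eventually_less_1_up_to_upper_endpoint[OF _ finite] cdf_nondecreasing
    by (auto simp: F mono_def)
  then have "eventually (\<lambda>s. 1 - F s \<in> {0<..} \<and> 1 - F s \<noteq> 0) (up_to (upper_endpoint F))"
    by (rule eventually_mono) simp
  then have vanishing_iff: "filterlim (\<lambda>s. 1 - F s) (at_right 0) (up_to (upper_endpoint F))
      \<longleftrightarrow> ((\<lambda>s. 1 - F s) \<longlongrightarrow> 0) (up_to (upper_endpoint F))"
    by (simp add: filterlim_at)
  show ?thesis
  proof (cases "upper_endpoint F")
    case PInf
    have "((\<lambda>s. 1 - F s) \<longlongrightarrow> 1 - 1) at_top"
      unfolding F by (intro tendsto_diff tendsto_const cdf_lim_at_top_prob)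
    then show ?thesis
      using vanishing_iff PInf vanishing by (simp add: up_to_def F_def)
  next
    case (real r)
    define p where "p = measure M {w \<in> space M. r \<le> X w $ \<kappa>}"
    have lim: "((\<lambda>s. 1 - F s) \<longlongrightarrow> 1 - (1 - p)) (at_left r)"
      using prob_all_le_tendsto_at_left[OF M X, of "{\<kappa>}" r]
      by (intro tendsto_diff tendsto_const) (simp add: F_def p_def marg_cdf_def[abs_def])
    show ?thesis
    proof (cases "p = 0")
      case True
      then show ?thesis
        using vanishing_iff real lim by (intro vanishing[folded F_def]) (simp add: up_to_def)
    next
      case False
      then show ?thesis
        using real measure_nonneg[of M] by (intro atom[folded F_def]) (auto simp: p_def order_le_less)
    qed
  qed (use finite in simp)
qed

lemma atom_tail_expansion:
  fixes X :: "'a \<Rightarrow> real^'d"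
  assumes M: "prob_space M" and X: "X \<in> borel_measurable M"
    and atom: "0 < measure M {w \<in> space M. r \<le> X w $ \<kappa>}"
    and \<gamma>: "\<And>i. ((\<lambda>s. (1 - marg_cdf M X i s) / (1 - marg_cdf M X \<kappa> s)) \<longlongrightarrow> \<gamma> i) (at_left r)"
  shows "\<exists>N. is_norm N \<and> (\<forall>i. N (axis i 1) = 1) \<and>
    (\<forall>K. K \<noteq> {} \<longrightarrow>
      (\<lambda>s. measure M {w \<in> space M. \<forall>k\<in>K. X w $ k \<le> s}
             - (1 - (1 - marg_cdf M X \<kappa> s) * N (\<Sum>k\<in>K. \<gamma> k *\<^sub>R axis k 1)))
      \<in> o[at_left r](\<lambda>s. 1 - marg_cdf M X \<kappa> s))"
proof -
  define A where "A k = {w \<in> space M. r \<le> X w $ k}" for k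
  note [measurable] = borel_measurable_vec_nth[OF X]
  interpret event_generator M A
    by (intro event_generator.intro event_generator_axioms.intro M) (simp add: A_def)
  have tail: "((\<lambda>s. 1 - marg_cdf M X k s) \<longlongrightarrow> prob (A k)) (at_left r)" for k
    using tendsto_diff[OF tendsto_const[of 1] prob_all_le_tendsto_at_left[OF M X, of "{k}" r]]
    by (simp add: A_def marg_cdf_def)
  have atom: "0 < prob (A \<kappa>)"
    using atom by (simp add: A_def)
  have \<gamma>_eq: "\<gamma> k = prob (A k) / prob (A \<kappa>)" for k
    using tendsto_unique[OF _ tendsto_divide[OF tail tail] \<gamma>[of k]] atom by simp
  have "\<forall>\<^sub>F s in at_left r. 0 < 1 - marg_cdf M X \<kappa> s"
    using order_tendstoD(1)[OF tail[of \<kappa>] atom] .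
  then have nonzero: "\<forall>\<^sub>F s in at_left r. 1 - marg_cdf M X \<kappa> s \<noteq> 0"
    by (rule eventually_mono) simp
  show ?thesis
  proof (intro exI[of _ generated_norm] conjI allI impI generated_norm_is_norm generated_norm_axis)
    fix K :: "'d set"
    assume K: "K \<noteq> {}"
    have "(\<Sum>k\<in>K. \<gamma> k *\<^sub>R axis k 1) $ i = (if i \<in> K then \<gamma> i else 0)" for i
      by (simp add: sum_component axis_def if_distrib cong: if_cong)
    then have "generated_norm (\<Sum>k\<in>K. \<gamma> k *\<^sub>R axis k 1) = prob (\<Union>k\<in>K. A k) / prob (A \<kappa>)"
      by (intro generated_norm_event_probabilities atom) (simp add: \<gamma>_eq)
    moreover have "((\<lambda>s. measure M {w \<in> space M. \<forall>k\<in>K. X w $ k \<le> s}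
        - (1 - (1 - marg_cdf M X \<kappa> s) * (prob (\<Union>k\<in>K. A k) / prob (A \<kappa>))))
        \<longlongrightarrow> (1 - prob (\<Union>k\<in>K. A k)) - (1 - prob (A \<kappa>) * (prob (\<Union>k\<in>K. A k) / prob (A \<kappa>))))
        (at_left r)"
      using prob_all_le_tendsto_at_left[OF M X K, of r]
      by (intro tendsto_intros tail) (simp add: A_def)
    ultimately have "((\<lambda>s. measure M {w \<in> space M. \<forall>k\<in>K. X w $ k \<le> s}
        - (1 - (1 - marg_cdf M X \<kappa> s) * generated_norm (\<Sum>k\<in>K. \<gamma> k *\<^sub>R axis k 1)))
        \<longlongrightarrow> 0) (at_left r)"
      using atom by simp
    from tendsto_divide[OF this tail[of \<kappa>]] nonzero atom
    show "(\<lambda>s. measure M {w \<in> space M. \<forall>k\<in>K. X w $ k \<le> s}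
        - (1 - (1 - marg_cdf M X \<kappa> s) * generated_norm (\<Sum>k\<in>K. \<gamma> k *\<^sub>R axis k 1)))
      \<in> o[at_left r](\<lambda>s. 1 - marg_cdf M X \<kappa> s)"
      by (intro smalloI_tendsto) simp_all
  qed
qed

theorem corollary2p2:
  fixes M :: "'a measure" and X :: "'a \<Rightarrow> real^'d"
    and C G :: "real^'d \<Rightarrow> real" and \<kappa> :: 'd and \<gamma> :: "'d \<Rightarrow> real"
  assumes "prob_space M"
    and "X \<in> borel_measurable M"
    and "is_copula_of C M X"
    and "mevd G"
    and "in_doa C G"
    and "\<forall>i. \<gamma> i \<ge> 0 \<and>
           ((\<lambda>s. (1 - marg_cdf M X i s) / (1 - marg_cdf M X \<kappa> s))
              \<longlongrightarrow> \<gamma> i) (up_to (upper_endpoint (marg_cdf M X \<kappa>)))"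
  shows "\<exists>N. is_norm N \<and> (\<forall>i. N (axis i 1) = 1) \<and>
    (\<forall>K. K \<noteq> {} \<longrightarrow>
      (\<lambda>s. measure M {w \<in> space M. \<forall>k\<in>K. X w $ k \<le> s}
             - (1 - (1 - marg_cdf M X \<kappa> s) * N (\<Sum>k\<in>K. \<gamma> k *\<^sub>R axis k 1)))
      \<in> o[up_to (upper_endpoint (marg_cdf M X \<kappa>))](\<lambda>s. 1 - marg_cdf M X \<kappa> s))"
proof -
  obtain Q where Q: "prob_space Q" "sets Q = sets (borel :: (real^'d) measure)" "C = mdf Q"
      "\<forall>i. \<forall>t\<in>{0..1}. measure Q {y. y $ i \<le> t} = t"
    and D: "distr Q borel (\<lambda>u. \<chi> i. geninv (marg_cdf M X i) (u $ i)) = distr M borel X"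
    using assms(3) unfolding is_copula_of_def by blast
  interpret copula_doa Q G
    by (intro copula_doa.intro copula_doa_axioms.intro uniform_margins.intro
        uniform_margins_axioms.intro Q(1,2)) (use Q(3,4) assms(5) in auto)
  have \<gamma>: "\<And>i. 0 \<le> \<gamma> i"
    "\<And>i. ((\<lambda>s. (1 - marg_cdf M X i s) / (1 - marg_cdf M X \<kappa> s)) \<longlongrightarrow> \<gamma> i)
      (up_to (upper_endpoint (marg_cdf M X \<kappa>)))"
    using assms(6) by auto
  show ?thesis
  proof (cases rule: upper_tail_cases[OF assms(1,2), of \<kappa>, case_names vanishing atom])
    case vanishing
    show ?thesis
      using D_norm_is_norm D_norm_axis D_norm_tail_expansion[OF assms(1,2) D vanishing \<gamma>] by blast
  next
    case (atom r)
    show ?thesis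
      using atom_tail_expansion[OF assms(1,2) atom(2)] \<gamma>(2) atom(1) by (simp add: up_to_def)
  qed
qed

end
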